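(* Let $k \geqslant 2$, and let $\pi_1, \ldots, \pi_k \geqslant 3$ be pairwise relatively prime integers, where $\pi_1=3$. Then the minimal DFA that recognizes the same language as the NFA $A_{\pi_1, \ldots, \pi_k}$ has at least $\prod_{i=1}^k (2^{\pi_i}-2)$ states.
   Context: The NFA $A_{\pi_1,\ldots,\pi_k}=(\{a,b\},Q,\{\widehat q\},\delta,\{\widehat q\})$ has states $Q=\{\widehat{q}\} \cup \bigcup_{i=1}^k \{q_{i,0}, \ldots, q_{i,\pi_i-1}\} \cup \bigcup_{i=1}^k \{r_{i,1}, \ldots, r_{i,\pi_i-2}\}$, unique initial state $\widehat q$, unique accepting state $\widehat q$, and exactly the following transitions: $\delta(\widehat{q}, a) = \{q_{1,0}, \ldots, q_{k,0}\}$; $\delta(q_{i,j},a) = \{q_{i,(j+1) \bmod \pi_i}\}$ for all $i$ and $0\leqslant j\leqslant \pi_i-1$; $\delta(q_{i,j},b) = \{r_{i,j}\}$ and $\delta(r_{i,j},a)=\{q_{i,j+1}\}$ for $1 \leqslant j \leqslant \pi_i-2$; $\delta(q_{i,0},b) = \{\widehat{q}\}$; all other transitions are empty. The language of an NFA is the set of strings on which some computation from an initial state ends in an accepting state. *)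

theory Defs
  imports Main
begin

datatype sym = SymA | SymB

datatype nstate = Qhat | Qst nat nat | Rst nat nat

fun nfa_step :: "(nat \<Rightarrow> nat) \<Rightarrow> nat \<Rightarrow> nstate \<Rightarrow> sym \<Rightarrow> nstate set" where
  "nfa_step p k Qhat SymA = {Qst i 0 | i. 1 \<le> i \<and> i \<le> k}"
| "nfa_step p k Qhat SymB = {}"
| "nfa_step p k (Qst i j) SymA =
     (if 1 \<le> i \<and> i \<le> k \<and> j < p i then {Qst i (Suc j mod p i)} else {})"
| "nfa_step p k (Qst i j) SymB =
     (if 1 \<le> i \<and> i \<le> k \<and> j = 0 then {Qhat}
      else if 1 \<le> i \<and> i \<le> k \<and> 1 \<le> j \<and> j \<le> p i - 2 then {Rst i j}
      else {})"
| "nfa_step p k (Rst i j) SymA =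
     (if 1 \<le> i \<and> i \<le> k \<and> 1 \<le> j \<and> j \<le> p i - 2 then {Qst i (Suc j)} else {})"
| "nfa_step p k (Rst i j) SymB = {}"

fun nfa_run :: "(nat \<Rightarrow> nat) \<Rightarrow> nat \<Rightarrow> nstate set \<Rightarrow> sym list \<Rightarrow> nstate set" where
  "nfa_run p k S [] = S"
| "nfa_run p k S (x # w) = nfa_run p k (\<Union>q\<in>S. nfa_step p k q x) w"

definition nfa_lang :: "(nat \<Rightarrow> nat) \<Rightarrow> nat \<Rightarrow> sym list set" where
  "nfa_lang p k = {w. Qhat \<in> nfa_run p k {Qhat} w}"

definition dfa_run :: "('q \<Rightarrow> sym \<Rightarrow> 'q) \<Rightarrow> 'q \<Rightarrow> sym list \<Rightarrow> 'q" where
  "dfa_run \<delta> q w = foldl \<delta> q w"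

definition dfa_recognizes :: "'q set \<Rightarrow> 'q \<Rightarrow> ('q \<Rightarrow> sym \<Rightarrow> 'q) \<Rightarrow> 'q set \<Rightarrow> sym list set \<Rightarrow> bool" where
  "dfa_recognizes Q q0 \<delta> F L \<longleftrightarrow>
     finite Q \<and> q0 \<in> Q \<and> (\<forall>q\<in>Q. \<forall>x. \<delta> q x \<in> Q) \<and> F \<subseteq> Q \<and>
     (\<forall>w. w \<in> L \<longleftrightarrow> dfa_run \<delta> q0 w \<in> F)"

end

theory Submission
  imports Defs "HOL-Number_Theory.Cong" "HOL-Library.FuncSet"
begin

(* Identify a set of NFA states with its configuration S, where S i is the set of positions j
   with q_{i,j} in the set. Every configuration whose components S i are proper nonempty subsets
   of Z/p_i is reachable, and two distinct such configurations are told apart by a word a^m b,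
   with m chosen by the Chinese remainder theorem so that the positions landing on q_{i,0} are
   prescribed ones; hence a DFA needs one state for each of the prod (2^p_i - 2) configurations.

   For reachability: a^m rotates every cycle by m, hence by the CRT every combination of
   rotations is available. If some cycle holds position 0, reading b a restarts all cycles at 0
   (via Qhat) and advances positions 1..p_i-2; conjugated by rotations, this moves in every
   cycle simultaneously a token from z_i+1 to z_i. Chosen at boundaries of S i, such a move
   leaves a cycle unchanged, inserts the new position z_i, or shifts one token of a helper cycle
   that feeds Qhat. Cycles 2..k are built token by token with cycle 1 as the helper; its number
   of tokens never changes, and as subsets of Z/3 of equal size are rotations of each other,
   a final rotation puts it in place. *)

definition rot :: "nat \<Rightarrow> nat \<Rightarrow> nat set \<Rightarrow> nat set" where
  "rot n c A = (\<lambda>j. (j + c) mod n) ` A"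

lemma rot_subset: "A \<subseteq> {..<n} \<Longrightarrow> rot n c A \<subseteq> {..<n}"
  unfolding rot_def by fastforce

lemma rot_rot: "rot n c (rot n d A) = rot n (d + c) A"
  unfolding rot_def image_image by (simp add: mod_add_left_eq add.assoc)

lemma rot_cong_mod: "c mod n = d mod n \<Longrightarrow> rot n c A = rot n d A"
  unfolding rot_def by (metis mod_add_right_eq)

lemma rot_0: "A \<subseteq> {..<n} \<Longrightarrow> rot n 0 A = A"
  unfolding rot_def by (force simp: image_iff)

lemma rot_singleton: "rot n c {x} = {(x + c) mod n}"
  unfolding rot_def by simp

lemma inj_on_rot: "inj_on (\<lambda>j. (j + c) mod n) {..<n::nat}"
proof (rule inj_onI)
  fix x y assume "x \<in> {..<n}" "y \<in> {..<n}" "(x + c) mod n = (y + c) mod n"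
  then show "x = y" using cong_add_rcancel_nat[of x c y n] by (simp add: cong_def)
qed

lemma card_rot: "A \<subseteq> {..<n} \<Longrightarrow> card (rot n c A) = card A"
  unfolding rot_def by (rule card_image) (rule inj_on_subset[OF inj_on_rot])

lemma rot_Diff: "A \<subseteq> {..<n} \<Longrightarrow> B \<subseteq> {..<n} \<Longrightarrow> rot n c (A - B) = rot n c A - rot n c B"
  unfolding rot_def by (rule inj_on_image_set_diff[OF inj_on_rot]) auto

lemma rot_Un: "rot n c (A \<union> B) = rot n c A \<union> rot n c B"
  unfolding rot_def by (rule image_Un)

lemma rot_inverse: "A \<subseteq> {..<n} \<Longrightarrow> (c + d) mod n = 0 \<Longrightarrow> rot n d (rot n c A) = A"
  by (metis rot_rot rot_0 rot_cong_mod mod_0)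

lemma rot_lessThan: "rot n c {..<n} = {..<n}"
  using card_subset_eq[OF finite_lessThan rot_subset[OF order_refl]] card_rot[of "{..<n}"] by simp

lemma rot_singleton_to: "a < n \<Longrightarrow> b < n \<Longrightarrow> rot n (b + n - a) {a} = {b}"
  by (simp add: rot_singleton)

definition proper_residues :: "nat \<Rightarrow> nat set \<Rightarrow> bool" where
  "proper_residues n A \<longleftrightarrow> A \<subseteq> {..<n} \<and> A \<noteq> {} \<and> A \<noteq> {..<n}"

lemma proper_residues_iff_card:
  "proper_residues n A \<longleftrightarrow> A \<subseteq> {..<n} \<and> 0 < card A \<and> card A < n"
proof (cases "A \<subseteq> {..<n}")
  case True
  then have "finite A" by (rule finite_subset) simp
  with True show ?thesis
    unfolding proper_residues_def
    using psubset_card_mono[of "{..<n}" A] by (auto simp: card_gt_0_iff)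
qed (simp add: proper_residues_def)

lemma card_proper_residues: "card {A. proper_residues n A} = 2 ^ n - 2"
proof -
  have "{A. proper_residues n A} = Pow {..<n} - {{}, {..<n}}"
    unfolding proper_residues_def by auto
  moreover have "card (Pow {..<n} - {{}, {..<n}}) = card (Pow {..<n}) - card {{}, {..<n}}"
    by (rule card_Diff_subset) auto
  moreover have "card {{}, {..<n}} = (if n = 0 then 1 else 2)"
    by (simp add: eq_commute[of "{}"] lessThan_empty_iff)
  ultimately show ?thesis by (simp add: card_Pow)
qed

lemma proper_residues_exit:
  assumes "proper_residues n A" shows "\<exists>z\<in>A. Suc z mod n \<notin> A"
proof (rule ccontr)
  assume "\<not> ?thesis"
  then have closed: "Suc z mod n \<in> A" if "z \<in> A" for z using that by blast
  from assms obtain t where t: "t \<in> A" "t < n" unfolding proper_residues_def by auto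
  have orbit: "(t + m) mod n \<in> A" for m
  proof (induction m)
    case (Suc m)
    then show ?case using closed[OF Suc] by (simp add: mod_Suc_eq)
  qed (use t in simp)
  have "j \<in> A" if "j < n" for j
    using orbit[of "j + n - t"] that t(2) by simp
  with assms show False unfolding proper_residues_def by auto
qed

lemma proper_residues_entry:
  assumes "proper_residues n A" shows "\<exists>z<n. z \<notin> A \<and> Suc z mod n \<in> A"
proof -
  have "proper_residues n ({..<n} - A)"
    using assms unfolding proper_residues_def by auto
  then show ?thesis using proper_residues_exit by fastforce
qed

lemma rot_co_singleton_to:
  "a < n \<Longrightarrow> b < n \<Longrightarrow> rot n (b + n - a) ({..<n} - {a}) = {..<n} - {b}"
  using rot_Diff[of "{..<n}" n "{a}" "b + n - a"] by (simp add: rot_lessThan rot_singleton_to)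

lemma proper_residues_3_rot:
  assumes A: "proper_residues 3 A" and B: "proper_residues 3 B" and card: "card A = card B"
  shows "\<exists>c. B = rot 3 c A"
proof (cases "card A = 1")
  case True
  then obtain a b where ab: "A = {a}" "B = {b}"
    using card card_1_singletonE by metis
  moreover have "a < 3" "b < 3"
    using A B unfolding ab proper_residues_def by auto
  ultimately show ?thesis using rot_singleton_to by metis
next
  case False
  then have "card A = 2" "card B = 2" using A card unfolding proper_residues_iff_card by auto
  moreover have sub: "A \<subseteq> {..<3}" "B \<subseteq> {..<3}"
    using A B unfolding proper_residues_def by auto
  moreover have "finite A" "finite B"
    using sub finite_subset by blast+
  ultimately have "card ({..<3} - A) = 1" "card ({..<3} - B) = 1"
    by (simp_all add: card_Diff_subset)
  then obtain a b where a: "{..<3} - A = {a}" and b: "{..<3} - B = {b}"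
    using card_1_singletonE by metis
  have "A = {..<3} - {a}" "B = {..<3} - {b}"
    unfolding a[symmetric] b[symmetric] using sub by (simp_all add: double_diff)
  moreover have "a < 3" "b < 3"
    using a b by (metis Diff_iff insertI1 lessThan_iff)+
  ultimately show ?thesis using rot_co_singleton_to by metis
qed

(* One cycle after reading b a, when some cycle holds position 0: the run through Qhat
   restarts it at 0, positions 1..n-2 advance through the r states and position n-1 dies. *)
definition ba_step :: "nat \<Rightarrow> nat set \<Rightarrow> nat set" where
  "ba_step n A = {0} \<union> Suc ` (A \<inter> {1..n - 2})"

lemma ba_step_subset: "0 < n \<Longrightarrow> ba_step n A \<subseteq> {..<n}"
  unfolding ba_step_def by auto

lemma rot_ba_step:
  assumes "0 < n" "A \<subseteq> {..<n}"
  shows "rot n (n - 1) (ba_step n A) = (A - {0}) \<union> {n - 1}"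
proof -
  have "(\<lambda>j. (Suc j + (n - 1)) mod n) ` (A \<inter> {1..n - 2}) = (\<lambda>j. j) ` (A \<inter> {1..n - 2})"
    using assms(1) by (intro image_cong) auto
  then have "rot n (n - 1) (ba_step n A) = {n - 1} \<union> (A \<inter> {1..n - 2})"
    using assms(1) unfolding rot_def ba_step_def by (simp add: image_Un image_image)
  also have "\<dots> = (A - {0}) \<union> {n - 1}"
    using assms(2) by auto
  finally show ?thesis .
qed

lemma rot_move:
  assumes "z < n" "A \<subseteq> {..<n}" "(Suc z + m) mod n = 0"
  shows "rot n (Suc z) ((rot n m A - {0}) \<union> {n - 1}) = (A - {Suc z mod n}) \<union> {z}"
proof -
  have "rot n (Suc z) (rot n m A - {0}) = rot n (Suc z) (rot n m A) - rot n (Suc z) {0}"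
    using rot_subset[OF assms(2), of m] assms(1) by (intro rot_Diff) auto
  moreover have "rot n (Suc z) (rot n m A) = A"
    using assms by (simp add: rot_inverse add.commute)
  moreover have "rot n (Suc z) {n - 1} = {z}"
    using assms(1) by (simp add: rot_singleton)
  ultimately show ?thesis by (metis rot_Un rot_singleton add_0)
qed

definition config :: "nat \<Rightarrow> (nat \<Rightarrow> nat set) \<Rightarrow> nstate set" where
  "config k S = {Qst i j | i j. 1 \<le> i \<and> i \<le> k \<and> j \<in> S i}"

definition bounded_config :: "(nat \<Rightarrow> nat) \<Rightarrow> nat \<Rightarrow> (nat \<Rightarrow> nat set) \<Rightarrow> bool" where
  "bounded_config p k S \<longleftrightarrow> (\<forall>i. 1 \<le> i \<longrightarrow> i \<le> k \<longrightarrow> S i \<subseteq> {..<p i})"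

definition reachable :: "(nat \<Rightarrow> nat) \<Rightarrow> nat \<Rightarrow> nstate set \<Rightarrow> bool" where
  "reachable p k X \<longleftrightarrow> (\<exists>w. nfa_run p k {Qhat} w = X)"

lemma config_cong: "(\<And>i. 1 \<le> i \<Longrightarrow> i \<le> k \<Longrightarrow> S i = T i) \<Longrightarrow> config k S = config k T"
  unfolding config_def by force

lemma bounded_config_rot:
  "bounded_config p k S \<Longrightarrow> bounded_config p k (\<lambda>i. rot (p i) (c i) (S i))"
  unfolding bounded_config_def by (simp add: rot_subset)

lemma nfa_run_append: "nfa_run p k X (u @ v) = nfa_run p k (nfa_run p k X u) v"
  by (induction u arbitrary: X) auto

lemma nfa_lang_append: "u @ v \<in> nfa_lang p k \<longleftrightarrow> Qhat \<in> nfa_run p k (nfa_run p k {Qhat} u) v"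
  unfolding nfa_lang_def by (simp add: nfa_run_append)

lemma reachable_nfa_run: "reachable p k X \<Longrightarrow> reachable p k (nfa_run p k X w)"
  unfolding reachable_def by (metis nfa_run_append)

lemma nfa_run_Qhat_a: "nfa_run p k {Qhat} [SymA] = config k (\<lambda>_. {0})"
  unfolding config_def by auto

lemma nfa_run_config_a:
  "bounded_config p k S \<Longrightarrow> nfa_run p k (config k S) [SymA] = config k (\<lambda>i. rot (p i) 1 (S i))"
  unfolding bounded_config_def config_def rot_def
  apply (auto split: if_splits)
  subgoal for i j by (rule exI[of _ "Qst i j"]) auto
  done

lemma nfa_run_config_replicate_a:
  "bounded_config p k S \<Longrightarrow>
   nfa_run p k (config k S) (replicate m SymA) = config k (\<lambda>i. rot (p i) m (S i))"
proof (induction m arbitrary: S)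
  case 0
  then show ?case
    unfolding bounded_config_def by (simp add: rot_0 cong: config_cong)
next
  case (Suc m)
  have "nfa_run p k (config k S) (replicate (Suc m) SymA)
      = nfa_run p k (config k (\<lambda>i. rot (p i) 1 (S i))) (replicate m SymA)"
    using nfa_run_config_a[OF Suc.prems] nfa_run_append[of p k _ "[SymA]" "replicate m SymA"]
    by simp
  also have "\<dots> = config k (\<lambda>i. rot (p i) (Suc m) (S i))"
    using Suc.IH[OF bounded_config_rot[OF Suc.prems]] by (simp add: rot_rot)
  finally show ?case .
qed

lemma Qhat_in_nfa_run_config_b:
  "Qhat \<in> nfa_run p k (config k S) [SymB] \<longleftrightarrow> (\<exists>l. 1 \<le> l \<and> l \<le> k \<and> 0 \<in> S l)"
  unfolding config_def
  apply (auto split: if_splits)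
  subgoal for l by (rule exI[of _ "Qst l 0"]) auto
  done

lemma nfa_run_config_ba:
  assumes "1 \<le> l" "l \<le> k" "0 \<in> S l"
  shows "nfa_run p k (config k S) [SymB, SymA] = config k (\<lambda>i. ba_step (p i) (S i))"
  using assms unfolding config_def ba_step_def
  apply (auto split: if_splits)
  subgoal for i by (rule exI[of _ "Qst l 0"]) auto
  subgoal for i j by (rule exI[of _ "Qst i j"]) auto
  done

lemma Qhat_in_nfa_run_config_replicate_a_b:
  assumes "bounded_config p k S"
  shows "Qhat \<in> nfa_run p k (config k S) (replicate m SymA @ [SymB])
    \<longleftrightarrow> (\<exists>l. 1 \<le> l \<and> l \<le> k \<and> 0 \<in> rot (p l) m (S l))"
  unfolding nfa_run_append nfa_run_config_replicate_a[OF assms] by (rule Qhat_in_nfa_run_config_b)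

lemma zero_in_rot_iff:
  assumes "A \<subseteq> {..<n}" "a < n" "(a + m) mod n = 0"
  shows "0 \<in> rot n m A \<longleftrightarrow> a \<in> A"
proof
  assume "0 \<in> rot n m A"
  then obtain x where x: "x \<in> A" "(x + m) mod n = (a + m) mod n"
    using assms(3) unfolding rot_def by auto
  then show "a \<in> A"
    using inj_onD[OF inj_on_rot x(2)] assms(1,2) by auto
next
  assume "a \<in> A"
  then show "0 \<in> rot n m A"
    unfolding rot_def using assms(3) by (metis rev_image_eqI)
qed

definition proper_config :: "(nat \<Rightarrow> nat) \<Rightarrow> nat \<Rightarrow> (nat \<Rightarrow> nat set) \<Rightarrow> bool" where
  "proper_config p k S \<longleftrightarrow> (\<forall>i. 1 \<le> i \<longrightarrow> i \<le> k \<longrightarrow> proper_residues (p i) (S i))"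

lemma proper_config_bounded: "proper_config p k S \<Longrightarrow> bounded_config p k S"
  unfolding proper_config_def bounded_config_def proper_residues_def by blast

lemma proper_residues_swap:
  assumes "proper_residues n A" "x \<in> A" "z < n" "z \<notin> A"
  shows "proper_residues n ((A - {x}) \<union> {z})" "card ((A - {x}) \<union> {z}) = card A"
proof -
  have "finite A" using assms(1) unfolding proper_residues_def by (meson finite_lessThan finite_subset)
  then show card: "card ((A - {x}) \<union> {z}) = card A"
    using assms(2,4) card_Diff1_less[of A x] by simp
  show "proper_residues n ((A - {x}) \<union> {z})"
    using assms(1,3) unfolding proper_residues_iff_card card by auto
qed

locale coprime_cycles =
  fixes p :: "nat \<Rightarrow> nat" and k :: nat
  assumes cycle_length_ge_2: "\<And>i. 1 \<le> i \<Longrightarrow> i \<le> k \<Longrightarrow> 2 \<le> p i"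
    and cycle_lengths_coprime:
      "\<And>i j. 1 \<le> i \<Longrightarrow> i \<le> k \<Longrightarrow> 1 \<le> j \<Longrightarrow> j \<le> k \<Longrightarrow> i \<noteq> j \<Longrightarrow> coprime (p i) (p j)"
begin

abbreviation reach :: "(nat \<Rightarrow> nat set) \<Rightarrow> bool" where
  "reach S \<equiv> reachable p k (config k S)"

lemma cycle_length_pos: "1 \<le> i \<Longrightarrow> i \<le> k \<Longrightarrow> 0 < p i"
  using cycle_length_ge_2 by fastforce

lemma chinese_remainder: "\<exists>m. \<forall>i. 1 \<le> i \<longrightarrow> i \<le> k \<longrightarrow> m mod p i = c i mod p i"
proof -
  have "\<exists>m. \<forall>i\<in>{1..k}. [m = c i] (mod p i)"
    by (rule chinese_remainder_nat) (use cycle_lengths_coprime in auto)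
  then obtain m where "\<forall>i\<in>{1..k}. [m = c i] (mod p i)" ..
  then show ?thesis unfolding cong_def by (intro exI[of _ m]) auto
qed

lemma chinese_remainder_cancel: "\<exists>m. \<forall>i. 1 \<le> i \<longrightarrow> i \<le> k \<longrightarrow> (a i + m) mod p i = 0"
proof -
  obtain m where m: "\<And>i. 1 \<le> i \<Longrightarrow> i \<le> k \<Longrightarrow> m mod p i = (p i - a i mod p i) mod p i"
    using chinese_remainder[of "\<lambda>i. p i - a i mod p i"] by blast
  have "(a i + m) mod p i = 0" if "1 \<le> i" "i \<le> k" for i
  proof -
    have "(a i + m) mod p i = (a i mod p i + (p i - a i mod p i)) mod p i"
      using m[OF that] by (metis mod_add_eq mod_mod_trivial)
    also have "\<dots> = 0"
      using cycle_length_ge_2[OF that] by (simp add: le_less_trans[OF _ mod_less_divisor])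
    finally show ?thesis .
  qed
  then show ?thesis by blast
qed

lemma reach_cong: "reach S \<Longrightarrow> (\<And>i. 1 \<le> i \<Longrightarrow> i \<le> k \<Longrightarrow> S i = T i) \<Longrightarrow> reach T"
  using config_cong by metis

lemma reach_initial: "reach (\<lambda>_. {0})"
  unfolding reachable_def by (metis nfa_run_Qhat_a)

lemma reach_rot_uniform: "reach S \<Longrightarrow> bounded_config p k S \<Longrightarrow> reach (\<lambda>i. rot (p i) m (S i))"
  using reachable_nfa_run[of p k _ "replicate m SymA"] nfa_run_config_replicate_a by metis

lemma reach_rot:
  assumes "reach S" "bounded_config p k S"
  shows "reach (\<lambda>i. rot (p i) (c i) (S i))"
proof -
  obtain m where m: "\<And>i. 1 \<le> i \<Longrightarrow> i \<le> k \<Longrightarrow> m mod p i = c i mod p i"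
    using chinese_remainder by blast
  have "reach (\<lambda>i. rot (p i) m (S i))"
    by (rule reach_rot_uniform[OF assms])
  then show ?thesis
    by (rule reach_cong) (rule rot_cong_mod, rule m)
qed

lemma reach_rot_component:
  assumes "reach S" "bounded_config p k S"
  shows "reach (S(i := rot (p i) c (S i)))"
proof -
  have "reach (\<lambda>j. rot (p j) (if j = i then c else 0) (S j))"
    by (rule reach_rot[OF assms])
  then show ?thesis
    by (rule reach_cong) (use assms(2) in \<open>auto simp: bounded_config_def rot_0\<close>)
qed

lemma reach_ba_step: "reach S \<Longrightarrow> 1 \<le> l \<Longrightarrow> l \<le> k \<Longrightarrow> 0 \<in> S l \<Longrightarrow> reach (\<lambda>i. ba_step (p i) (S i))"
  using reachable_nfa_run[of p k _ "[SymB, SymA]"] nfa_run_config_ba by metis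

lemma reach_move_zero:
  assumes "reach S" "bounded_config p k S" "1 \<le> l" "l \<le> k" "0 \<in> S l"
  shows "reach (\<lambda>i. (S i - {0}) \<union> {p i - 1})"
proof -
  have "reach (\<lambda>i. ba_step (p i) (S i))"
    by (rule reach_ba_step[OF assms(1,3-5)])
  moreover have "bounded_config p k (\<lambda>i. ba_step (p i) (S i))"
    unfolding bounded_config_def by (simp add: ba_step_subset cycle_length_pos)
  ultimately have "reach (\<lambda>i. rot (p i) (p i - 1) (ba_step (p i) (S i)))"
    by (rule reach_rot)
  then show ?thesis
  proof (rule reach_cong)
    fix i assume "1 \<le> i" "i \<le> k"
    then show "rot (p i) (p i - 1) (ba_step (p i) (S i)) = (S i - {0}) \<union> {p i - 1}"
      using assms(2) cycle_length_pos unfolding bounded_config_def by (intro rot_ba_step) auto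
  qed
qed

lemma reach_move:
  assumes "reach S" "bounded_config p k S" and z: "\<And>i. 1 \<le> i \<Longrightarrow> i \<le> k \<Longrightarrow> z i < p i"
    and l: "1 \<le> l" "l \<le> k" "Suc (z l) mod p l \<in> S l"
  shows "reach (\<lambda>i. (S i - {Suc (z i) mod p i}) \<union> {z i})"
proof -
  obtain m where m: "\<And>i. 1 \<le> i \<Longrightarrow> i \<le> k \<Longrightarrow> (Suc (z i) + m) mod p i = 0"
    using chinese_remainder_cancel[of "\<lambda>i. Suc (z i)"] by blast
  define S1 where "S1 i = rot (p i) m (S i)" for i
  have bounded1: "bounded_config p k S1"
    unfolding S1_def by (rule bounded_config_rot[OF assms(2)])
  have "(Suc (z l) mod p l + m) mod p l = 0"
    using m[OF l(1,2)] by (simp add: mod_add_left_eq)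
  then have "0 \<in> S1 l"
    using l(3) unfolding S1_def rot_def by (metis rev_image_eqI)
  then have "reach (\<lambda>i. (S1 i - {0}) \<union> {p i - 1})"
    using reach_move_zero[OF _ bounded1 l(1,2)] reach_rot_uniform[OF assms(1,2)]
    unfolding S1_def by blast
  moreover have "bounded_config p k (\<lambda>i. (S1 i - {0}) \<union> {p i - 1})"
    using bounded1 unfolding bounded_config_def by (auto simp: cycle_length_pos)
  ultimately have "reach (\<lambda>i. rot (p i) (Suc (z i)) ((S1 i - {0}) \<union> {p i - 1}))"
    by (rule reach_rot)
  then show ?thesis
  proof (rule reach_cong)
    fix i assume "1 \<le> i" "i \<le> k"
    then show "rot (p i) (Suc (z i)) ((S1 i - {0}) \<union> {p i - 1}) = (S i - {Suc (z i) mod p i}) \<union> {z i}"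
      using assms(2) z m unfolding S1_def bounded_config_def by (intro rot_move) auto
  qed
qed

lemma reach_insert:
  assumes "reach S" "proper_config p k S"
    and i: "1 \<le> i" "i \<le> k" and h: "1 \<le> h" "h \<le> k" "h \<noteq> i"
    and z: "z < p i" "z \<notin> S i" "Suc z mod p i \<notin> S i"
    and proper: "proper_residues (p i) (insert z (S i))"
  shows "\<exists>S'. reach S' \<and> proper_config p k S' \<and> S' i = insert z (S i) \<and> card (S' h) = card (S h)
    \<and> (\<forall>j. 1 \<le> j \<longrightarrow> j \<le> k \<longrightarrow> j \<noteq> i \<longrightarrow> j \<noteq> h \<longrightarrow> S' j = S j)"
proof -
  have proper_S: "\<And>j. 1 \<le> j \<Longrightarrow> j \<le> k \<Longrightarrow> proper_residues (p j) (S j)"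
    using assms(2) unfolding proper_config_def by blast
  obtain zh where zh: "zh < p h" "zh \<notin> S h" "Suc zh mod p h \<in> S h"
    using proper_residues_entry[OF proper_S[OF h(1,2)]] by blast
  obtain zo where zo: "\<And>j. 1 \<le> j \<Longrightarrow> j \<le> k \<Longrightarrow> zo j \<in> S j \<and> Suc (zo j) mod p j \<notin> S j"
    using proper_residues_exit[OF proper_S] by metis
  \<comment> \<open>Every cycle other than i and h moves a token from an empty position onto an occupied one,
    so it does not change.\<close>
  define y where "y j = (if j = i then z else if j = h then zh else zo j)" for j
  define S' where "S' j = (S j - {Suc (y j) mod p j}) \<union> {y j}" for j
  have "reach S'"
    unfolding S'_def
  proof (rule reach_move[OF assms(1) proper_config_bounded[OF assms(2)] _ h(1,2)])
    fix j assume "1 \<le> j" "j \<le> k"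
    then show "y j < p j"
      using z zh zo[of j] proper_S[of j] unfolding y_def proper_residues_def by auto
  qed (use zh h in \<open>simp add: y_def\<close>)
  moreover have S'_i: "S' i = insert z (S i)"
    using z unfolding S'_def y_def by auto
  moreover have S'_h: "proper_residues (p h) (S' h)" "card (S' h) = card (S h)"
    using proper_residues_swap[OF proper_S[OF h(1,2)] zh(3,1,2)] h(3) unfolding S'_def y_def by auto
  moreover have S'_j: "S' j = S j" if "1 \<le> j" "j \<le> k" "j \<noteq> i" "j \<noteq> h" for j
    using zo[OF that(1,2)] that(3,4) unfolding S'_def y_def by auto
  moreover have "proper_config p k S'"
    unfolding proper_config_def using proper S'_i S'_h(1) S'_j proper_S by metis
  ultimately show ?thesis by blast
qed

lemma reach_replace_singleton:
  assumes "reach S" "proper_config p k S" "1 \<le> i" "i \<le> k" "S i = {s}" "b < p i"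
  shows "reach (S(i := {b}))" "proper_config p k (S(i := {b}))"
proof -
  have "s < p i"
    using assms(2-5) unfolding proper_config_def proper_residues_def by auto
  then have "rot (p i) (b + p i - s) (S i) = {b}"
    using assms(5,6) rot_singleton_to by simp
  then show "reach (S(i := {b}))"
    using reach_rot_component[OF assms(1) proper_config_bounded[OF assms(2)], of i "b + p i - s"]
    by simp
  show "proper_config p k (S(i := {b}))"
    using assms(2,6) cycle_length_ge_2[OF assms(3,4)]
    unfolding proper_config_def proper_residues_iff_card by auto
qed

lemma reach_set_component:
  assumes i: "1 \<le> i" "i \<le> k" and h: "1 \<le> h" "h \<le> k" "h \<noteq> i"
    and B: "proper_residues (p i) B"
    and S: "reach S" "proper_config p k S" "card (S i) = 1"
  shows "\<exists>S'. reach S' \<and> proper_config p k S' \<and> S' i = B \<and> card (S' h) = card (S h)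
    \<and> (\<forall>j. 1 \<le> j \<longrightarrow> j \<le> k \<longrightarrow> j \<noteq> i \<longrightarrow> j \<noteq> h \<longrightarrow> S' j = S j)"
  using B
proof (induction "card B" arbitrary: B)
  case 0
  then show ?case unfolding proper_residues_iff_card by simp
next
  case (Suc n)
  show ?case
  proof (cases n)
    case 0
    then have "card B = 1"
      using Suc.hyps(2) by simp
    then obtain b where b: "B = {b}"
      by (rule card_1_singletonE)
    obtain s where s: "S i = {s}"
      using S(3) by (rule card_1_singletonE)
    have "b < p i"
      using Suc.prems b unfolding proper_residues_def by auto
    then show ?thesis
      using reach_replace_singleton[OF S(1,2) i s] b h(3) by (intro exI[of _ "S(i := {b})"]) auto
  next
    case (Suc n')
    obtain z where z: "z \<in> B" "Suc z mod p i \<notin> B"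
      using proper_residues_exit[OF Suc.prems] by blast
    have "finite B"
      using Suc.prems unfolding proper_residues_def by (meson finite_lessThan finite_subset)
    then have card': "card (B - {z}) = n"
      using z(1) \<open>Suc n = card B\<close> by simp
    have "proper_residues (p i) (B - {z})"
      using Suc.prems Suc.hyps(2) card' Suc unfolding proper_residues_iff_card by auto
    then obtain S' where S': "reach S'" "proper_config p k S'" "S' i = B - {z}"
      "card (S' h) = card (S h)" "\<forall>j. 1 \<le> j \<longrightarrow> j \<le> k \<longrightarrow> j \<noteq> i \<longrightarrow> j \<noteq> h \<longrightarrow> S' j = S j"
      using Suc.hyps(1)[OF card'[symmetric]] by blast
    have "z < p i"
      using z(1) Suc.prems unfolding proper_residues_def by auto
    moreover have "insert z (S' i) = B"
      using z(1) S'(3) by auto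
    ultimately obtain S'' where "reach S''" "proper_config p k S''" "S'' i = B"
      "card (S'' h) = card (S' h)" "\<forall>j. 1 \<le> j \<longrightarrow> j \<le> k \<longrightarrow> j \<noteq> i \<longrightarrow> j \<noteq> h \<longrightarrow> S'' j = S' j"
      using reach_insert[OF S'(1,2) i h, of z] z S'(3) Suc.prems by auto
    with S' show ?thesis by auto
  qed
qed

lemma reach_base:
  assumes "2 \<le> k" "0 < c" "c \<le> 2" "c < p 1"
  shows "\<exists>S. reach S \<and> proper_config p k S \<and> card (S 1) = c \<and> (\<forall>j. 2 \<le> j \<longrightarrow> j \<le> k \<longrightarrow> card (S j) = 1)"
proof -
  have init: "proper_config p k (\<lambda>_. {0})"
    using cycle_length_ge_2 unfolding proper_config_def proper_residues_iff_card by fastforce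
  show ?thesis
  proof (cases "c = 1")
    case True
    then show ?thesis using reach_initial init by auto
  next
    case False
    then have c: "c = 2" using assms(2,3) by simp
    have "proper_residues (p 1) (insert 1 {0})"
      using assms(4) c unfolding proper_residues_iff_card by auto
    then obtain S where S: "reach S" "proper_config p k S" "S 1 = {1, 0}" "card (S 2) = 1"
      "\<forall>j. 1 \<le> j \<longrightarrow> j \<le> k \<longrightarrow> j \<noteq> 1 \<longrightarrow> j \<noteq> 2 \<longrightarrow> S j = {0}"
      using reach_insert[OF reach_initial init, of 1 2 1] assms(1,4) c by auto
    moreover have "card (S j) = 1" if "2 \<le> j" "j \<le> k" for j
      using S(4,5) that by (cases "j = 2") auto
    ultimately show ?thesis using c by (intro exI[of _ S]) auto
  qed
qed

lemma reach_prefix: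
  assumes k: "2 \<le> k" and p1: "p 1 = 3" and T: "proper_config p k T" and n: "1 \<le> n" "n \<le> k"
  shows "\<exists>S. reach S \<and> proper_config p k S \<and> card (S 1) = card (T 1)
    \<and> (\<forall>j. 2 \<le> j \<longrightarrow> j \<le> n \<longrightarrow> S j = T j) \<and> (\<forall>j. n < j \<longrightarrow> j \<le> k \<longrightarrow> card (S j) = 1)"
  using n
proof (induction n rule: nat_induct_at_least)
  case base
  have "0 < card (T 1)" "card (T 1) < 3"
    using T k p1 unfolding proper_config_def proper_residues_iff_card by force+
  then show ?case
    using reach_base[OF k, of "card (T 1)"] p1 by fastforce
next
  case (Suc n)
  then obtain S where S: "reach S" "proper_config p k S" "card (S 1) = card (T 1)"
    "\<forall>j. 2 \<le> j \<longrightarrow> j \<le> n \<longrightarrow> S j = T j" "\<forall>j. n < j \<longrightarrow> j \<le> k \<longrightarrow> card (S j) = 1"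
    by auto
  have "proper_residues (p (Suc n)) (T (Suc n))"
    using T Suc.prems unfolding proper_config_def by auto
  then obtain S' where S': "reach S'" "proper_config p k S'" "S' (Suc n) = T (Suc n)"
    "card (S' 1) = card (S 1)" "\<forall>j. 1 \<le> j \<longrightarrow> j \<le> k \<longrightarrow> j \<noteq> Suc n \<longrightarrow> j \<noteq> 1 \<longrightarrow> S' j = S j"
    using reach_set_component[of "Suc n" 1 "T (Suc n)" S] S(1,2,5) Suc.hyps(1) Suc.prems by auto
  show ?case
  proof (intro exI[of _ S'] conjI allI impI)
    fix j assume "2 \<le> j" "j \<le> Suc n"
    then show "S' j = T j" using S(4) S'(3,5) Suc.prems by (cases "j = Suc n") auto
  next
    fix j assume "Suc n < j" "j \<le> k"
    then show "card (S' j) = 1" using S(5) S'(5) by auto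
  qed (use S S' in auto)
qed

theorem reach_proper_config:
  assumes k: "2 \<le> k" and p1: "p 1 = 3" and T: "proper_config p k T"
  shows "reach T"
proof -
  obtain S where S: "reach S" "proper_config p k S"
    "card (S 1) = card (T 1)" "\<forall>j. 2 \<le> j \<longrightarrow> j \<le> k \<longrightarrow> S j = T j"
    using reach_prefix[OF assms, of k] k by auto
  have "proper_residues 3 (S 1)" "proper_residues 3 (T 1)"
    using S(2) T k p1 unfolding proper_config_def by force+
  then obtain c where c: "T 1 = rot 3 c (S 1)"
    using proper_residues_3_rot S(3) by blast
  have "reach (S(1 := rot (p 1) c (S 1)))"
    by (rule reach_rot_component[OF S(1) proper_config_bounded[OF S(2)]])
  then show ?thesis
    by (rule reach_cong) (use S(4) c p1 in \<open>auto simp: not_less_eq_eq\<close>)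
qed

lemma proper_config_separating_word:
  assumes T: "proper_config p k T" and T': "proper_config p k T'"
    and i: "1 \<le> i" "i \<le> k" and x: "x \<in> T i" "x \<notin> T' i"
  shows "\<exists>w. Qhat \<in> nfa_run p k (config k T) w \<and> Qhat \<notin> nfa_run p k (config k T') w"
proof -
  have "\<forall>l. \<exists>y. 1 \<le> l \<and> l \<le> k \<longrightarrow> y < p l \<and> y \<notin> T' l"
    using T' unfolding proper_config_def proper_residues_def by blast
  then obtain g where g: "\<And>l. 1 \<le> l \<Longrightarrow> l \<le> k \<Longrightarrow> g l < p l \<and> g l \<notin> T' l"
    by metis
  define a where "a l = (if l = i then x else g l)" for l
  have a: "a l < p l" "a l \<notin> T' l" if "1 \<le> l" "l \<le> k" for l
    using g[OF that] T i x unfolding a_def proper_config_def proper_residues_def by auto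
  obtain m where m: "\<And>l. 1 \<le> l \<Longrightarrow> l \<le> k \<Longrightarrow> (a l + m) mod p l = 0"
    using chinese_remainder_cancel by blast
  have bounded: "bounded_config p k T" "bounded_config p k T'"
    using T T' by (simp_all add: proper_config_bounded)
  have "0 \<in> rot (p i) m (T i)"
    using zero_in_rot_iff a(1)[OF i] m[OF i] bounded(1) i x(1)
    unfolding a_def bounded_config_def by auto
  then have "Qhat \<in> nfa_run p k (config k T) (replicate m SymA @ [SymB])"
    unfolding Qhat_in_nfa_run_config_replicate_a_b[OF bounded(1)] using i by blast
  moreover have "0 \<notin> rot (p l) m (T' l)" if "1 \<le> l" "l \<le> k" for l
    using zero_in_rot_iff a[OF that] m[OF that] bounded(2) that
    unfolding bounded_config_def by auto
  then have "Qhat \<notin> nfa_run p k (config k T') (replicate m SymA @ [SymB])"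
    unfolding Qhat_in_nfa_run_config_replicate_a_b[OF bounded(2)] by blast
  ultimately show ?thesis by blast
qed


lemma proper_config_distinguishable:
  assumes "proper_config p k T" "proper_config p k T'" "i \<in> {1..k}" "T i \<noteq> T' i"
  shows "\<exists>w. (Qhat \<in> nfa_run p k (config k T) w) \<noteq> (Qhat \<in> nfa_run p k (config k T') w)"
proof -
  obtain x where "x \<in> T i \<and> x \<notin> T' i \<or> x \<in> T' i \<and> x \<notin> T i"
    using assms(4) by blast
  then show ?thesis
    using proper_config_separating_word[OF assms(1,2)] proper_config_separating_word[OF assms(2,1)]
      assms(3) by (metis atLeastAtMost_iff)
qed

end

lemma dfa_run_append: "dfa_run \<delta> q (u @ v) = dfa_run \<delta> (dfa_run \<delta> q u) v"
  unfolding dfa_run_def by simp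

lemma dfa_run_closed: "(\<forall>q\<in>Q. \<forall>x. \<delta> q x \<in> Q) \<Longrightarrow> q \<in> Q \<Longrightarrow> dfa_run \<delta> q w \<in> Q"
  unfolding dfa_run_def by (induction w arbitrary: q) auto

lemma card_le_dfa_states:
  assumes dfa: "dfa_recognizes Q q0 \<delta> F L"
    and dist: "\<And>x y. x \<in> X \<Longrightarrow> y \<in> X \<Longrightarrow> x \<noteq> y \<Longrightarrow> \<exists>w. (u x @ w \<in> L) \<noteq> (u y @ w \<in> L)"
  shows "card X \<le> card Q"
proof -
  define f where "f x = dfa_run \<delta> q0 (u x)" for x
  have accept: "u x @ w \<in> L \<longleftrightarrow> dfa_run \<delta> (f x) w \<in> F" for x w
    using dfa unfolding dfa_recognizes_def f_def by (simp add: dfa_run_append)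
  have "inj_on f X"
  proof (rule inj_onI, rule ccontr)
    fix x y assume "x \<in> X" "y \<in> X" "f x = f y" "x \<noteq> y"
    then obtain w where "(u x @ w \<in> L) \<noteq> (u y @ w \<in> L)"
      using dist by blast
    then show False
      unfolding accept \<open>f x = f y\<close> by simp
  qed
  moreover have "f ` X \<subseteq> Q"
    using dfa unfolding dfa_recognizes_def f_def by (auto intro: dfa_run_closed)
  moreover have "finite Q"
    using dfa unfolding dfa_recognizes_def by simp
  ultimately show ?thesis
    by (rule card_inj_on_le)
qed

theorem lemma6:
  fixes p :: "nat \<Rightarrow> nat" and k :: nat
    and Q :: "'q set" and q0 :: 'q and \<delta> :: "'q \<Rightarrow> sym \<Rightarrow> 'q" and F :: "'q set"
  assumes "k \<ge> 2"
    and "\<And>i. 1 \<le> i \<Longrightarrow> i \<le> k \<Longrightarrow> p i \<ge> 3"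
    and "\<And>i j. 1 \<le> i \<Longrightarrow> i \<le> k \<Longrightarrow> 1 \<le> j \<Longrightarrow> j \<le> k \<Longrightarrow> i \<noteq> j \<Longrightarrow> coprime (p i) (p j)"
    and "p 1 = 3"
    and "dfa_recognizes Q q0 \<delta> F (nfa_lang p k)"
  shows "card Q \<ge> (\<Prod>i=1..k. 2 ^ p i - 2)"
proof -
  interpret coprime_cycles p k
  proof
    show "2 \<le> p i" if "1 \<le> i" "i \<le> k" for i
      using assms(2)[OF that] by simp
  qed (fact assms(3))
  define Fam where "Fam = PiE {1..k} (\<lambda>i. {A. proper_residues (p i) A})"
  have proper: "proper_config p k T" if "T \<in> Fam" for T
    using that unfolding Fam_def proper_config_def by auto
  have "\<forall>T\<in>Fam. \<exists>u. nfa_run p k {Qhat} u = config k T"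
    using reach_proper_config[OF assms(1,4) proper] unfolding reachable_def by blast
  from bchoice[OF this] obtain u where u: "\<forall>T\<in>Fam. nfa_run p k {Qhat} (u T) = config k T"
    by blast
  have "card Fam \<le> card Q"
  proof (rule card_le_dfa_states[OF assms(5)])
    fix T T' assume T: "T \<in> Fam" and T': "T' \<in> Fam" and "T \<noteq> T'"
    then obtain i where "i \<in> {1..k}" "T i \<noteq> T' i"
      using PiE_ext[OF T[unfolded Fam_def] T'[unfolded Fam_def]] by blast
    then obtain w where "(Qhat \<in> nfa_run p k (config k T) w) \<noteq> (Qhat \<in> nfa_run p k (config k T') w)"
      using proper_config_distinguishable[OF proper[OF T] proper[OF T']] by blast
    then show "\<exists>w. (u T @ w \<in> nfa_lang p k) \<noteq> (u T' @ w \<in> nfa_lang p k)"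
      unfolding nfa_lang_append using u T T' by auto
  qed
  moreover have "card Fam = (\<Prod>i=1..k. 2 ^ p i - 2)"
    unfolding Fam_def by (simp add: card_PiE card_proper_residues)
  ultimately show ?thesis by simp
qed

end
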